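(* Let $n\ge1$ and let $\mathcal{G}=(\mathcal{V},\mathcal{E})$ be the multigraph with vertex set $\mathcal{V}=\{0,\ldots,n\}$ and, for each $i\in\{1,\dots,n\}$, exactly two parallel edges $e_i^{(0)},e_i^{(1)}$ between vertices $i-1$ and $i$ (and no other edges). Let $\epsilon,\delta\ge0$ and $\alpha\ge0$, and let $\mathcal{A}$ be an algorithm that is $(\epsilon,\delta)$-differentially private on $\mathcal{G}$ and that on every input edge weights $w:\mathcal{E}\to\{0,1\}$ produces a path from $s=0$ to $t=n$ with expected approximation error at most $\alpha$. Then there exists a $(2\epsilon,(1+e^{\epsilon})\delta)$-differentially private algorithm $\mathcal{B}$ which on every input $x\in\{0,1\}^n$ produces $y\in\{0,1\}^n$ such that the expected Hamming distance $d_H(x,y)$ is at most $\alpha$.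
   Context: Private edge weight model: for a graph $\mathcal{G}=(\mathcal{V},\mathcal{E})$, a weight function is $w:\mathcal{E}\to\mathbb{R}^+$ (nonnegative reals). Two weight functions $w,w'$ are neighboring if $\sum_{e\in\mathcal{E}}|w(e)-w'(e)|\le 1$. A randomized algorithm $\mathcal{A}$ on weight functions is $(\epsilon,\delta)$-differentially private on $\mathcal{G}$ if for all neighboring $w,w'$ and all sets $S$ of outputs, $\Pr[\mathcal{A}(w)\in S]\le e^{\epsilon}\Pr[\mathcal{A}(w')\in S]+\delta$. The approximation error of a path $P$ from $s$ to $t$ is $w(P)-d_w(s,t)$, where $w(P)$ is the sum of the edge weights on $P$ and $d_w(s,t)$ is the minimum such weight over paths from $s$ to $t$. A randomized algorithm $\mathcal{B}$ with inputs in $\{0,1\}^n$ is $(\epsilon',\delta')$-differentially private if for all $x,x'\in\{0,1\}^n$ differing in exactly one coordinate and all sets $S$ of outputs, $\Pr[\mathcal{B}(x)\in S]\le e^{\epsilon'}\Pr[\mathcal{B}(x')\in S]+\delta'$. $d_H$ denotes Hamming distance. *)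

theory Defs
  imports "HOL-Probability.Probability"
begin

text \<open>The multigraph on vertices 0..n: edge (i,b), 1 \<le> i \<le> n, b :: bool, is the
  b-th of the two parallel edges between vertices i-1 and i.\<close>
definition edges :: "nat \<Rightarrow> (nat \<times> bool) set" where
  "edges n = {1..n} \<times> UNIV"

definition connects :: "nat \<times> bool \<Rightarrow> nat \<Rightarrow> nat \<Rightarrow> bool" where
  "connects e u v \<longleftrightarrow> {u, v} = {fst e - 1, fst e}"

definition is_path :: "nat \<Rightarrow> (nat \<times> bool) list \<Rightarrow> nat \<Rightarrow> nat \<Rightarrow> bool" where
  "is_path n P s t \<longleftrightarrow>
     (\<exists>vs. length vs = length P + 1 \<and> hd vs = s \<and> last vs = t \<and> distinct vs \<and>
       (\<forall>j < length P. P ! j \<in> edges n \<and> connects (P ! j) (vs ! j) (vs ! Suc j)))"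

definition path_weight :: "(nat \<times> bool \<Rightarrow> real) \<Rightarrow> (nat \<times> bool) list \<Rightarrow> real" where
  "path_weight w P = sum_list (map w P)"

definition sp_dist :: "nat \<Rightarrow> (nat \<times> bool \<Rightarrow> real) \<Rightarrow> nat \<Rightarrow> nat \<Rightarrow> real" where
  "sp_dist n w s t = Inf {path_weight w P | P. is_path n P s t}"

definition is_weight :: "nat \<Rightarrow> (nat \<times> bool \<Rightarrow> real) \<Rightarrow> bool" where
  "is_weight n w \<longleftrightarrow> (\<forall>e\<in>edges n. 0 \<le> w e) \<and> (\<forall>e. e \<notin> edges n \<longrightarrow> w e = 0)"

definition neighboring :: "nat \<Rightarrow> (nat \<times> bool \<Rightarrow> real) \<Rightarrow> (nat \<times> bool \<Rightarrow> real) \<Rightarrow> bool" where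
  "neighboring n w w' \<longleftrightarrow> (\<Sum>e\<in>edges n. \<bar>w e - w' e\<bar>) \<le> 1"

definition dp_graph :: "nat \<Rightarrow> real \<Rightarrow> real \<Rightarrow> ((nat \<times> bool \<Rightarrow> real) \<Rightarrow> 'b pmf) \<Rightarrow> bool" where
  "dp_graph n \<epsilon> \<delta> A \<longleftrightarrow>
     (\<forall>w w'. is_weight n w \<and> is_weight n w' \<and> neighboring n w w' \<longrightarrow>
        (\<forall>S. measure_pmf.prob (A w) S \<le> exp \<epsilon> * measure_pmf.prob (A w') S + \<delta>))"

definition hamming :: "bool list \<Rightarrow> bool list \<Rightarrow> nat" where
  "hamming x y = card {i. i < length x \<and> x ! i \<noteq> y ! i}"

definition dp_bits :: "nat \<Rightarrow> real \<Rightarrow> real \<Rightarrow> (bool list \<Rightarrow> 'b pmf) \<Rightarrow> bool" where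
  "dp_bits n \<epsilon> \<delta> B \<longleftrightarrow>
     (\<forall>x x'. length x = n \<and> length x' = n \<and> hamming x x' = 1 \<longrightarrow>
        (\<forall>S. measure_pmf.prob (B x) S \<le> exp \<epsilon> * measure_pmf.prob (B x') S + \<delta>))"

end

theory Submission
  imports Defs
begin

text \<open>Encode a bit string \<open>x\<close> as the 0/1 weight function that is 0 on the edge \<open>e\<^sub>i\<^sup>(x\<^sub>i)\<close> and
  1 on \<open>e\<^sub>i\<^sup>(1-x\<^sub>i)\<close>, run \<open>\<A>\<close>, and decode the returned path by reading off which of the two
  parallel edges it uses at each level. An \<open>s\<close>-\<open>t\<close> path must cross every level, so each
  decoded bit that differs from \<open>x\<close> costs the path weight 1, while the shortest path has
  weight 0: the Hamming error is bounded by the approximation error. Two bit strings at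
  Hamming distance 1 yield weight functions at \<open>\<ell>\<^sub>1\<close>-distance 2, which are joined by two
  neighbouring steps through their pointwise minimum, so two applications of the privacy of
  \<open>\<A>\<close> give the privacy of \<open>\<B>\<close>; decoding is post-processing.\<close>

lemma sum_set_le_sum_list:
  fixes w :: "'a \<Rightarrow> real"
  assumes "\<And>x. x \<in> set xs \<Longrightarrow> 0 \<le> w x"
  shows "sum w (set xs) \<le> sum_list (map w xs)"
  using assms
proof (induction xs)
  case (Cons a xs)
  then have "sum w (set (a # xs)) \<le> w a + sum w (set xs)"
    by (cases "a \<in> set xs") (simp_all add: insert_absorb)
  with Cons show ?case by simp
qed simp

lemma path_vertices_le:
  assumes "length vs = length P + 1" "last vs = n"
    and "\<forall>j < length P. P ! j \<in> edges n \<and> connects (P ! j) (vs ! j) (vs ! Suc j)"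
    and "v \<in> set vs"
  shows "v \<le> n"
proof -
  obtain k where k: "k < length vs" "vs ! k = v"
    using assms(4) by (auto simp: in_set_conv_nth)
  show ?thesis
  proof (cases "k < length P")
    case True
    with assms(3) have "P ! k \<in> edges n" "connects (P ! k) (vs ! k) (vs ! Suc k)" by auto
    with k show ?thesis by (auto simp: edges_def connects_def doubleton_eq_iff)
  next
    case False
    with k assms(1) have "k = length vs - 1" "vs \<noteq> []" by auto
    with k assms(2) show ?thesis by (simp add: last_conv_nth)
  qed
qed

lemma path_length_le:
  assumes "is_path n P 0 n"
  shows "length P \<le> n"
proof -
  obtain vs where vs: "length vs = length P + 1" "last vs = n" "distinct vs"
    "\<forall>j < length P. P ! j \<in> edges n \<and> connects (P ! j) (vs ! j) (vs ! Suc j)"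
    using assms unfolding is_path_def by blast
  have "set vs \<subseteq> {0..n}"
    using path_vertices_le[OF vs(1,2,4)] by auto
  then have "card (set vs) \<le> Suc n"
    using card_mono[of "{0..n}"] by fastforce
  with distinct_card[OF vs(3)] vs(1) show ?thesis by simp
qed

text \<open>The edge leaving the last vertex below level \<open>i\<close> reaches level \<open>i\<close>, so it is a copy of \<open>e\<^sub>i\<close>.\<close>
lemma path_crosses_level:
  assumes "is_path n P 0 n" "1 \<le> i" "i \<le> n"
  obtains b where "(i, b) \<in> set P"
proof -
  obtain vs where vs: "length vs = length P + 1" "hd vs = 0" "last vs = n"
    "\<forall>j < length P. P ! j \<in> edges n \<and> connects (P ! j) (vs ! j) (vs ! Suc j)"
    using assms(1) unfolding is_path_def by blast
  have last_vs: "vs ! length P = n" and first_vs: "vs ! 0 = 0"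
    using vs(1-3) by (simp_all add: last_conv_nth hd_conv_nth flip: length_greater_0_conv)
  define j where "j = (LEAST j. i \<le> vs ! j)"
  have reach: "i \<le> vs ! j" and "j \<le> length P"
    unfolding j_def using assms(3) last_vs by (auto intro: LeastI Least_le)
  moreover have "j \<noteq> 0"
    using reach first_vs assms(2) by (cases j) auto
  ultimately obtain k where k: "j = Suc k" "k < length P"
    by (cases j) auto
  have "vs ! k < i"
    using not_less_Least[of k "\<lambda>j. i \<le> vs ! j"] k(1) unfolding j_def by auto
  moreover have "P ! k \<in> edges n" "connects (P ! k) (vs ! k) (vs ! Suc k)"
    using vs(4) k(2) by auto
  ultimately have "fst (P ! k) = i"
    using reach k(1) by (auto simp: edges_def connects_def doubleton_eq_iff)
  then have "(i, snd (P ! k)) \<in> set P"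
    using k(2) by (metis nth_mem prod.collapse)
  then show ?thesis by (rule that)
qed

lemma level_path_is_path:
  "is_path n (map (\<lambda>i. (Suc i, x ! i)) [0..<n]) 0 n"
  unfolding is_path_def
proof (intro exI[of _ "[0..<Suc n]"] conjI allI impI)
  fix j assume "j < length (map (\<lambda>i. (Suc i, x ! i)) [0..<n])"
  then show "map (\<lambda>i. (Suc i, x ! i)) [0..<n] ! j \<in> edges n"
    and "connects (map (\<lambda>i. (Suc i, x ! i)) [0..<n] ! j) ([0..<Suc n] ! j) ([0..<Suc n] ! Suc j)"
    by (simp_all add: edges_def connects_def nth_upt del: upt_Suc)
qed (simp_all only: length_map length_upt hd_upt last_upt zero_less_Suc diff_Suc_1 distinct_upt
       diff_zero)

definition bit_weight :: "nat \<Rightarrow> bool list \<Rightarrow> nat \<times> bool \<Rightarrow> real" where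
  "bit_weight n x e = (if fst e \<in> {1..n} \<and> snd e \<noteq> x ! (fst e - 1) then 1 else 0)"

definition path_bits :: "nat \<Rightarrow> (nat \<times> bool) list \<Rightarrow> bool list" where
  "path_bits n P = map (\<lambda>i. (Suc i, True) \<in> set P) [0..<n]"

lemma is_weight_bit_weight: "is_weight n (bit_weight n x)"
  by (auto simp: is_weight_def bit_weight_def edges_def)

lemma bit_weight_01: "bit_weight n x e \<in> {0, 1}"
  by (simp add: bit_weight_def)

lemma path_weight_bit_weight_bounds:
  "0 \<le> path_weight (bit_weight n x) P" "path_weight (bit_weight n x) P \<le> length P"
proof -
  show "0 \<le> path_weight (bit_weight n x) P"
    unfolding path_weight_def by (auto simp: bit_weight_def intro!: sum_list_nonneg)
  have "path_weight (bit_weight n x) P \<le> sum_list (map (\<lambda>_. 1) P)"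
    unfolding path_weight_def by (rule sum_list_mono) (simp add: bit_weight_def)
  then show "path_weight (bit_weight n x) P \<le> length P"
    by (simp add: sum_list_triv)
qed

lemma sp_dist_bit_weight_nonpos: "sp_dist n (bit_weight n x) 0 n \<le> 0"
proof -
  let ?P = "map (\<lambda>i. (Suc i, x ! i)) [0..<n]"
  have "path_weight (bit_weight n x) ?P = 0"
    by (simp add: path_weight_def bit_weight_def comp_def)
  then have "0 \<in> {path_weight (bit_weight n x) P | P. is_path n P 0 n}"
    using level_path_is_path by force
  moreover have "bdd_below {path_weight (bit_weight n x) P | P. is_path n P 0 n}"
    by (rule bdd_belowI[of _ 0]) (use path_weight_bit_weight_bounds(1) in auto)
  ultimately show ?thesis
    unfolding sp_dist_def by (rule cInf_lower)
qed

text \<open>Each wrong bit \<open>i\<close> of the decoded string forces the path to use \<open>e\<^sub>i\<^sub>+\<^sub>1\<^sup>(\<not> x\<^sub>i)\<close>, of weight 1.\<close>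
lemma hamming_path_bits_le:
  assumes "length x = n" "is_path n P 0 n"
  shows "real (hamming x (path_bits n P)) \<le> path_weight (bit_weight n x) P"
proof -
  define I where "I = {i. i < length x \<and> x ! i \<noteq> path_bits n P ! i}"
  define g where "g i = (Suc i, \<not> x ! i)" for i
  have "inj_on g I"
    by (auto simp: g_def inj_on_def)
  have wrong_edges: "g ` I \<subseteq> set P"
  proof
    fix e assume "e \<in> g ` I"
    then obtain i where i: "i < n" "e = (Suc i, \<not> x ! i)"
      and wrong: "x ! i \<longleftrightarrow> (Suc i, True) \<notin> set P"
      using assms(1) by (auto simp: I_def g_def path_bits_def)
    obtain b where "(Suc i, b) \<in> set P"
      using path_crosses_level[OF assms(2), of "Suc i"] i(1) by auto
    with wrong i(2) show "e \<in> set P" by (cases b; cases "x ! i") auto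
  qed
  have "real (hamming x (path_bits n P)) = sum (bit_weight n x) (g ` I)"
    using sum.reindex[OF \<open>inj_on g I\<close>, of "bit_weight n x"] assms(1)
    by (simp add: hamming_def I_def g_def bit_weight_def)
  also have "\<dots> \<le> sum (bit_weight n x) (set P)"
    using wrong_edges by (intro sum_mono2) (auto simp: bit_weight_def)
  also have "\<dots> \<le> path_weight (bit_weight n x) P"
    unfolding path_weight_def by (rule sum_set_le_sum_list) (simp add: bit_weight_def)
  finally show ?thesis .
qed

lemma hamming_le_length: "hamming x y \<le> length x"
  unfolding hamming_def by (rule order.trans[OF card_mono[of "{..<length x}"]]) auto

lemma hamming_eq_1E:
  assumes "length x = n" "hamming x x' = 1"
  obtains i where "i < n" "x ! i \<noteq> x' ! i" "\<And>j. j < n \<Longrightarrow> j \<noteq> i \<Longrightarrow> x ! j = x' ! j"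
proof -
  obtain i where i: "{j. j < length x \<and> x ! j \<noteq> x' ! j} = {i}"
    using assms(2) unfolding hamming_def by (rule card_1_singletonE)
  then have "i < n" "x ! i \<noteq> x' ! i"
    using assms(1) by blast+
  moreover have "x ! j = x' ! j" if "j < n" "j \<noteq> i" for j
    using i that assms(1) by blast
  ultimately show ?thesis
    by (rule that)
qed

lemma neighboring_if_differ_on_one_edge:
  assumes "i < n" "\<And>e. e \<noteq> (Suc i, b) \<Longrightarrow> w e = w' e" "\<bar>w (Suc i, b) - w' (Suc i, b)\<bar> \<le> 1"
  shows "neighboring n w w'"
proof -
  have "(\<Sum>e\<in>edges n. \<bar>w e - w' e\<bar>) = \<bar>w (Suc i, b) - w' (Suc i, b)\<bar>"
    using assms(1,2) by (subst sum.remove[of _ "(Suc i, b)"]) (auto simp: edges_def)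
  with assms(3) show ?thesis
    unfolding neighboring_def by simp
qed

text \<open>The pointwise minimum of the two encodings differs from each of them on a single edge.\<close>
lemma bit_weight_hamming_1_path:
  assumes "length x = n" "hamming x x' = 1"
  shows "neighboring n (bit_weight n x) (\<lambda>e. min (bit_weight n x e) (bit_weight n x' e))"
    and "neighboring n (\<lambda>e. min (bit_weight n x e) (bit_weight n x' e)) (bit_weight n x')"
proof -
  obtain i where i: "i < n" "x ! i \<noteq> x' ! i"
    and same: "\<And>j. j < n \<Longrightarrow> j \<noteq> i \<Longrightarrow> x ! j = x' ! j"
    using hamming_eq_1E[OF assms] by blast
  have agree: "bit_weight n x (k, b) = bit_weight n x' (k, b)" if "k \<noteq> Suc i" for k b
  proof (cases "k \<in> {1..n}")
    case True
    with that have "x ! (k - 1) = x' ! (k - 1)"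
      by (intro same) auto
    then show ?thesis by (simp add: bit_weight_def)
  qed (auto simp: bit_weight_def)
  have level: "bit_weight n x (Suc i, b) = (if b = x ! i then 0 else 1)"
    "bit_weight n x' (Suc i, b) = (if b = x ! i then 1 else 0)" for b
    using i by (auto simp: bit_weight_def)
  show "neighboring n (bit_weight n x) (\<lambda>e. min (bit_weight n x e) (bit_weight n x' e))"
  proof (rule neighboring_if_differ_on_one_edge[OF i(1), where b = "\<not> x ! i"])
    fix e :: "nat \<times> bool" assume e: "e \<noteq> (Suc i, \<not> x ! i)"
    show "bit_weight n x e = min (bit_weight n x e) (bit_weight n x' e)"
    proof (cases e)
      case (Pair k b)
      with e agree[of k b] show ?thesis
        by (cases "k = Suc i") (simp_all add: level)
    qed
  qed (simp add: level)
  show "neighboring n (\<lambda>e. min (bit_weight n x e) (bit_weight n x' e)) (bit_weight n x')"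
  proof (rule neighboring_if_differ_on_one_edge[OF i(1), where b = "x ! i"])
    fix e :: "nat \<times> bool" assume e: "e \<noteq> (Suc i, x ! i)"
    show "min (bit_weight n x e) (bit_weight n x' e) = bit_weight n x' e"
    proof (cases e)
      case (Pair k b)
      with e agree[of k b] show ?thesis
        by (cases "k = Suc i") (simp_all add: level)
    qed
  qed (simp add: level)
qed

lemma dp_graph_two_steps:
  assumes "dp_graph n \<epsilon> \<delta> A" "is_weight n w" "is_weight n w'" "is_weight n w''"
    and "neighboring n w w'" "neighboring n w' w''"
  shows "measure_pmf.prob (A w) S \<le> exp (2 * \<epsilon>) * measure_pmf.prob (A w'') S + (1 + exp \<epsilon>) * \<delta>"
proof -
  have "measure_pmf.prob (A w) S \<le> exp \<epsilon> * measure_pmf.prob (A w') S + \<delta>"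
    using assms(1,2,3,5) unfolding dp_graph_def by blast
  also have "\<dots> \<le> exp \<epsilon> * (exp \<epsilon> * measure_pmf.prob (A w'') S + \<delta>) + \<delta>"
    using assms(1,3,4,6) unfolding dp_graph_def by simp
  also have "\<dots> = exp (2 * \<epsilon>) * measure_pmf.prob (A w'') S + (1 + exp \<epsilon>) * \<delta>"
    by (simp add: mult_exp_exp algebra_simps)
  finally show ?thesis .
qed

lemma dp_bits_bit_weight:
  assumes "dp_graph n \<epsilon> \<delta> A"
  shows "dp_bits n (2 * \<epsilon>) ((1 + exp \<epsilon>) * \<delta>) (\<lambda>x. map_pmf f (A (bit_weight n x)))"
  unfolding dp_bits_def measure_map_pmf
proof (intro allI impI)
  fix x x' :: "bool list" and S
  assume "length x = n \<and> length x' = n \<and> hamming x x' = 1"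
  then have "hamming x x' = 1" "length x = n" by auto
  let ?mid = "\<lambda>e. min (bit_weight n x e) (bit_weight n x' e)"
  have "is_weight n ?mid"
    using is_weight_bit_weight[of n x] is_weight_bit_weight[of n x'] by (simp add: is_weight_def)
  with bit_weight_hamming_1_path[OF \<open>length x = n\<close> \<open>hamming x x' = 1\<close>]
  show "measure_pmf.prob (A (bit_weight n x)) (f -` S)
      \<le> exp (2 * \<epsilon>) * measure_pmf.prob (A (bit_weight n x')) (f -` S) + (1 + exp \<epsilon>) * \<delta>"
    by (intro dp_graph_two_steps[OF assms is_weight_bit_weight _ is_weight_bit_weight])
qed

lemma expected_hamming_le_expected_error:
  assumes "length x = n" "\<forall>P\<in>set_pmf M. is_path n P 0 n"
  shows "measure_pmf.expectation (map_pmf (path_bits n) M) (\<lambda>y. real (hamming x y))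
    \<le> measure_pmf.expectation M (\<lambda>P. path_weight (bit_weight n x) P - sp_dist n (bit_weight n x) 0 n)"
    (is "_ \<le> measure_pmf.expectation M ?err")
proof -
  let ?d = "sp_dist n (bit_weight n x) 0 n"
  have "\<bar>?err P\<bar> \<le> real n + \<bar>?d\<bar>" if "P \<in> set_pmf M" for P
    using path_weight_bit_weight_bounds[of n x P] path_length_le[of n P] assms(2) that
    by (smt (verit) of_nat_le_iff)
  then have "integrable M ?err"
    by (intro measure_pmf.integrable_const_bound[where B = "real n + \<bar>?d\<bar>"])
      (simp_all add: AE_measure_pmf_iff)
  moreover have "integrable M (\<lambda>P. real (hamming x (path_bits n P)))"
    using hamming_le_length[of x] assms(1)
    by (intro measure_pmf.integrable_const_bound[where B = "real n"]) simp_all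
  moreover have "real (hamming x (path_bits n P)) \<le> ?err P" if "P \<in> set_pmf M" for P
    using hamming_path_bits_le[OF assms(1)] sp_dist_bit_weight_nonpos assms(2) that
    by (smt (verit))
  ultimately show ?thesis
    unfolding integral_map_pmf by (intro integral_mono_AE) (simp_all add: AE_measure_pmf_iff)
qed

theorem lemma5p2:
  fixes n :: nat and \<epsilon> \<delta> \<alpha> :: real
    and A :: "(nat \<times> bool \<Rightarrow> real) \<Rightarrow> (nat \<times> bool) list pmf"
  assumes "n \<ge> 1" and "\<epsilon> \<ge> 0" and "\<delta> \<ge> 0" and "\<alpha> \<ge> 0"
    and "dp_graph n \<epsilon> \<delta> A"
    and "\<forall>w. is_weight n w \<and> (\<forall>e\<in>edges n. w e \<in> {0, 1}) \<longrightarrow>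
           (\<forall>P\<in>set_pmf (A w). is_path n P 0 n) \<and>
           measure_pmf.expectation (A w) (\<lambda>P. path_weight w P - sp_dist n w 0 n) \<le> \<alpha>"
  shows "\<exists>B :: bool list \<Rightarrow> bool list pmf.
           dp_bits n (2 * \<epsilon>) ((1 + exp \<epsilon>) * \<delta>) B \<and>
           (\<forall>x. length x = n \<longrightarrow>
              (\<forall>y\<in>set_pmf (B x). length y = n) \<and>
              measure_pmf.expectation (B x) (\<lambda>y. real (hamming x y)) \<le> \<alpha>)"
proof (intro exI[of _ "\<lambda>x. map_pmf (path_bits n) (A (bit_weight n x))"] conjI allI impI)
  show "dp_bits n (2 * \<epsilon>) ((1 + exp \<epsilon>) * \<delta>) (\<lambda>x. map_pmf (path_bits n) (A (bit_weight n x)))"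
    using assms(5) by (rule dp_bits_bit_weight)
next
  fix x :: "bool list" assume x: "length x = n"
  show "\<forall>y\<in>set_pmf (map_pmf (path_bits n) (A (bit_weight n x))). length y = n"
    by (auto simp: path_bits_def)
  have "(\<forall>P\<in>set_pmf (A (bit_weight n x)). is_path n P 0 n) \<and>
      measure_pmf.expectation (A (bit_weight n x))
        (\<lambda>P. path_weight (bit_weight n x) P - sp_dist n (bit_weight n x) 0 n) \<le> \<alpha>"
    using assms(6) is_weight_bit_weight bit_weight_01 by blast
  then show "measure_pmf.expectation (map_pmf (path_bits n) (A (bit_weight n x)))
      (\<lambda>y. real (hamming x y)) \<le> \<alpha>"
    using expected_hamming_le_expected_error[OF x] by (meson order.trans)
qed

end
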